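(* For every integer $m\ge1$, $$\mathfrak p^{(2m)}=\sum_{a=0}^{m-1}q^{(3-2m)a}\begin{bmatrix}m-1\\ a\end{bmatrix}_{q^2}\mathfrak g^{(2m-2a)},\qquad \mathfrak p^{(2m+1)}=\sum_{a=0}^{m-1}q^{(1-2m)a}\begin{bmatrix}m-1\\ a\end{bmatrix}_{q^2}\mathfrak g^{(2m-2a+1)}.$$ In particular, $\mathfrak p^{(n)}(\kappa)\in\mathbb Z[q,q^{-1}]$ for all $n\in\mathbb N$ and all $\kappa=[2\ell-1]$ with $\ell\in\mathbb Z$.
   Context: $q$ is an indeterminate, $[n]=\frac{q^n-q^{-n}}{q-q^{-1}}$ for $n\in\mathbb Z$, $[n]!=[1]\cdots[n]$, $[0]!=1$. For $0\le a\le N$, $\begin{bmatrix}N\\ a\end{bmatrix}_{q^2}$ denotes the balanced Gaussian binomial coefficient in $q^2$, i.e. $\frac{[N]_{q^2}!}{[a]_{q^2}![N-a]_{q^2}!}$ with $[k]_{q^2}=\frac{q^{2k}-q^{-2k}}{q^2-q^{-2}}$. The polynomials $\mathfrak p_n(x)$ are defined by $\mathfrak p_0=1$, $\mathfrak p_n=0$ for $n<0$, $\mathfrak p_{n+1}=x\,\mathfrak p_n+q^{2-2n}[n][n-2]\mathfrak p_{n-1}$ ($n\ge0$); $\mathfrak p^{(n)}=\mathfrak p_n/[n]!$. The polynomials $\mathfrak g_n(x)$ are $\mathfrak g_{2m}(x)=\prod_{i=1}^{m}(x^2-[2i-1]^2)$ and $\mathfrak g_{2m+1}(x)=x\prod_{i=1}^m(x^2-[2i-1]^2)$;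 $\mathfrak g^{(n)}=\mathfrak g_n/[n]!$. *)

theory Defs
  imports "HOL-Computational_Algebra.Polynomial"
begin

text \<open>The indeterminate q is modelled as an element of an arbitrary field of
characteristic 0 that is transcendental over the rationals (no nonzero integer
polynomial vanishes at q); the field Q(q) itself is such an instance.\<close>

definition q_transcendental :: "'a::field_char_0 \<Rightarrow> bool" where
  "q_transcendental q \<longleftrightarrow> (\<forall>p::int poly. p \<noteq> 0 \<longrightarrow> poly (map_poly of_int p) q \<noteq> 0)"

definition qint :: "'a::field \<Rightarrow> int \<Rightarrow> 'a" where
  "qint q n = (q powi n - q powi (-n)) / (q - inverse q)"

definition qfact :: "'a::field \<Rightarrow> nat \<Rightarrow> 'a" where
  "qfact q n = (\<Prod>i=1..n. qint q (int i))"

definition qbinom2 :: "'a::field \<Rightarrow> nat \<Rightarrow> nat \<Rightarrow> 'a" where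
  "qbinom2 q N a = qfact (q^2) N / (qfact (q^2) a * qfact (q^2) (N - a))"

fun pp :: "'a::field \<Rightarrow> nat \<Rightarrow> 'a poly" where
  "pp q 0 = 1"
| "pp q (Suc 0) = [:0, 1:]"
| "pp q (Suc (Suc n)) =
     [:0, 1:] * pp q (Suc n)
     + smult (q powi (2 - 2 * (int n + 1)) * qint q (int n + 1) * qint q (int n - 1)) (pp q n)"

definition pdiv :: "'a::field \<Rightarrow> nat \<Rightarrow> 'a poly" where
  "pdiv q n = smult (inverse (qfact q n)) (pp q n)"

definition gg :: "'a::field \<Rightarrow> nat \<Rightarrow> 'a poly" where
  "gg q n = (if even n then 1 else [:0, 1:]) *
     (\<Prod>i=1..n div 2. [:- ((qint q (2 * int i - 1))^2), 0, 1:])"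

definition gdiv :: "'a::field \<Rightarrow> nat \<Rightarrow> 'a poly" where
  "gdiv q n = smult (inverse (qfact q n)) (gg q n)"

definition in_Zq :: "'a::field_char_0 \<Rightarrow> 'a \<Rightarrow> bool" where
  "in_Zq q c \<longleftrightarrow> (\<exists>(f::int poly) (N::nat). c = poly (map_poly of_int f) q / q ^ N)"

end

theory Submission
  imports Defs
begin

(* Divided by [n]!, the recurrence of the p_n reads
     [n+2] p^(n+2) = x p^(n+1) + q^(-2n) [n-1] p^(n),
   while x g^(2k) = [2k+1] g^(2k+1) and x g^(2k+1) = [2k+2] g^(2k+2) + [2k+1] g^(2k).
   Substituting the expansions into the recurrence and comparing the coefficients of each g^(j),
   the induction on m reduces to the absorption identities of the q^2-binomials and two
   Laurent polynomial identities between quantum integers.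

   For integrality, [2l-1]^2 - [2i-1]^2 = (q + 1/q)^2 [l+i-1]_(q^2) [l-i]_(q^2), so g^(2m)([2l-1])
   is prod_(j=1..2m) (q^j + q^-j) times a q^2-binomial coefficient with integer top l+m-1, and
   similarly for odd index.  By q-Pascal these binomials, and with them every p^(n)([2l-1]),
   lie in Z[q, 1/q]. *)

section \<open>Quantum integers\<close>

lemma qint_altdef: "qint r k = (r powi k - inverse (r powi k)) / (r - inverse r)"
  by (simp add: qint_def power_int_minus)

lemma qint_zero [simp]: "qint r 0 = 0"
  by (simp add: qint_def)

lemma qint_uminus: "qint r (- k) = - qint r k"
  by (simp add: qint_def minus_divide_left)

lemma qint_one: "r - inverse r \<noteq> 0 \<Longrightarrow> qint r 1 = 1"
  by (simp add: qint_def power_int_minus)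

lemma qint_add:
  assumes "(r::'a::field) \<noteq> 0"
  shows "qint r (a + b) = r powi b * qint r a + r powi (- a) * qint r b"
proof -
  define u v where "u = r powi a" and "v = r powi b"
  have "u \<noteq> 0" "v \<noteq> 0" using assms by (simp_all add: u_def v_def)
  then have "u * v - inverse (u * v) = v * (u - inverse u) + inverse u * (v - inverse v)"
    by (simp add: field_simps)
  moreover have "r powi (a + b) = u * v" "r powi (- a) = inverse u"
    using assms by (simp_all add: u_def v_def power_int_add power_int_minus)
  ultimately show ?thesis
    by (simp add: qint_altdef add_divide_distrib flip: u_def v_def)
qed

lemma qint_add_plus_diff:
  assumes "(r::'a::field) \<noteq> 0"
  shows "qint r (a + b) + qint r (a - b) = (r powi b + r powi (- b)) * qint r a"
  using qint_add [OF assms, of a b] qint_add [OF assms, of a "- b"]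
  by (simp add: qint_uminus algebra_simps)

lemma qint_double:
  assumes "(r::'a::field) \<noteq> 0"
  shows "qint r (2 * k) = (r powi k + r powi (- k)) * qint r k"
  using qint_add_plus_diff [OF assms, of k k] by (simp only: mult_2 diff_self qint_zero add_0_right)

lemma qint_mult_add_diff:
  assumes "(r::'a::field) \<noteq> 0"
  shows "qint r (a + b) * qint r (a - b) = (qint r a)\<^sup>2 - (qint r b)\<^sup>2"
proof -
  define N where "N k = r powi k - inverse (r powi k)" for k
  define u v where "u = r powi a" and "v = r powi b"
  have "u \<noteq> 0" "v \<noteq> 0" using assms by (simp_all add: u_def v_def)
  then have "(u * v - inverse (u * v)) * (u / v - inverse (u / v)) = (u - inverse u)\<^sup>2 - (v - inverse v)\<^sup>2"
    by (simp add: field_simps power2_eq_square)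
  then have "N (a + b) * N (a - b) = (N a)\<^sup>2 - (N b)\<^sup>2"
    using assms by (simp add: N_def power_int_add power_int_diff flip: u_def v_def)
  then show ?thesis
    by (simp add: qint_altdef power_divide power2_eq_square flip: N_def diff_divide_distrib)
qed

lemma qint_square_base:
  assumes "(r::'a::field) \<noteq> 0"
  shows "(r + inverse r) * qint (r\<^sup>2) k = qint r (2 * k)"
proof (cases "r + inverse r = 0")
  case True
  then have "r\<^sup>2 = -1"
    using assms by (simp add: field_simps power2_eq_square eq_neg_iff_add_eq_0)
  then have "r powi (2 * k) * r powi (2 * k) = 1"
    by (simp add: power_int_mult flip: power_int_add mult_2)
  then have "inverse (r powi (2 * k)) = r powi (2 * k)"
    by (rule inverse_unique)
  then show ?thesis
    using True by (simp add: qint_altdef)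
next
  case False
  have "r\<^sup>2 - inverse (r\<^sup>2) = (r + inverse r) * (r - inverse r)"
    using assms by (simp add: field_simps power2_eq_square)
  then show ?thesis
    using False by (simp add: qint_def power_int_power)
qed

lemma power_int_ne_one:
  assumes "(r::'a::field) \<noteq> 0" "\<And>n. 0 < n \<Longrightarrow> r ^ n \<noteq> 1" "k \<noteq> 0"
  shows "r powi k \<noteq> 1"
proof (cases "k > 0")
  case True
  then show ?thesis using assms(2) [of "nat k"] by (simp add: power_int_nonneg_exp)
next
  case False
  then have "r powi k = inverse (r ^ nat (- k))"
    by (simp add: power_int_def power_inverse)
  then show ?thesis using assms(2) [of "nat (- k)"] assms(3) False by auto
qed

lemma qint_nonzero:
  assumes "(r::'a::field) \<noteq> 0" "\<And>n. 0 < n \<Longrightarrow> r ^ n \<noteq> 1" "k \<noteq> 0"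
  shows "qint r k \<noteq> 0"
proof
  assume "qint r k = 0"
  moreover have "r - inverse r \<noteq> 0"
  proof
    assume "r - inverse r = 0"
    then have "r * r = 1"
      using assms(1) by (simp add: field_simps)
    then show False
      using assms(2) [of 2] by (simp add: power2_eq_square)
  qed
  ultimately have "r powi k = inverse (r powi k)"
    by (simp add: qint_altdef)
  then have "r powi k * r powi k = 1"
    using assms(1) by (metis power_int_not_zero right_inverse)
  then have "r powi (2 * k) = 1"
    using assms(1) by (simp flip: power_int_add mult_2)
  then show False
    using power_int_ne_one [OF assms(1,2), of "2 * k"] assms(3) by simp
qed

lemma qfact_Suc: "qfact r (Suc n) = qfact r n * qint r (int n + 1)"
  by (simp add: qfact_def add.commute)

lemma qfact_nonzero:
  assumes "(r::'a::field) \<noteq> 0" "\<And>n. 0 < n \<Longrightarrow> r ^ n \<noteq> 1"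
  shows "qfact r n \<noteq> 0"
  by (induction n) (simp_all add: qfact_def qfact_Suc qint_nonzero [OF assms])

(* The indeterminate enters only through the nonvanishing of [k] and [k]_(q^2) for k \<noteq> 0,
   so the expansion holds for every q that is not a root of unity. *)
locale generic_q =
  fixes q :: "'a::field"
  assumes q_nonzero: "q \<noteq> 0"
    and q_not_root_of_unity: "\<And>n. 0 < n \<Longrightarrow> q ^ n \<noteq> 1"
begin

lemma power_int_mult_eq: "i + j = k \<Longrightarrow> q powi i * q powi j = q powi k"
  using q_nonzero by (simp flip: power_int_add)

lemma q_squared_not_root_of_unity: "0 < n \<Longrightarrow> (q\<^sup>2) ^ n \<noteq> 1"
  using q_not_root_of_unity [of "2 * n"] by (simp add: power_mult)

lemma qint_q_nonzero: "k \<noteq> 0 \<Longrightarrow> qint q k \<noteq> 0"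
  by (rule qint_nonzero [OF q_nonzero q_not_root_of_unity])

lemma qint_q2_nonzero: "k \<noteq> 0 \<Longrightarrow> qint (q\<^sup>2) k \<noteq> 0"
  by (rule qint_nonzero) (use q_nonzero q_squared_not_root_of_unity in auto)

lemma qfact_q_nonzero: "qfact q n \<noteq> 0"
  by (rule qfact_nonzero [OF q_nonzero q_not_root_of_unity])

lemma qfact_q2_nonzero: "qfact (q\<^sup>2) n \<noteq> 0"
  by (rule qfact_nonzero) (use q_nonzero q_squared_not_root_of_unity in auto)

lemma qint_q_one: "qint q 1 = 1"
  using qint_q_nonzero [of 1] by (simp add: qint_def split: if_splits)

lemma q_plus_inverse_nonzero: "q + inverse q \<noteq> 0"
  using qint_square_base [OF q_nonzero, of 1] qint_q_nonzero [of 2] by auto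

(* After multiplication by q + 1/q, which turns [k]_(q^2) into [2k], both sides become
   differences of squares of quantum integers. *)
lemma even_step_identity:
  fixes m a :: int
  shows "qint (q\<^sup>2) m * qint q (2 * m + 2)
    = qint (q\<^sup>2) (m - a - 1) * qint q (2 * (m - a))
      + q powi (2 * m - 1) * qint (q\<^sup>2) (a + 1) * qint q (2 * (m - a) + 1)
      + q powi (2 * a - 2 * m - 1) * qint q (2 * m - 1) * qint (q\<^sup>2) (a + 1)"
    (is "?lhs = ?rhs")
proof -
  let ?c = "q + inverse q"
  have sq1: "qint q (2 * m + 2) * qint q (2 * m) = (qint q (2 * m + 1))\<^sup>2 - 1"
    using qint_mult_add_diff [OF q_nonzero, of "2 * m + 1" 1] by (simp add: qint_q_one add.assoc)
  have sq2: "qint q (2 * (m - a)) * qint q (2 * (m - a - 1)) = (qint q (2 * (m - a) - 1))\<^sup>2 - 1"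
    using qint_mult_add_diff [OF q_nonzero, of "2 * (m - a) - 1" 1]
    by (simp add: qint_q_one algebra_simps)
  have sq3: "qint q (4 * m - 2 * a) * qint q (2 * (a + 1))
      = (qint q (2 * m + 1))\<^sup>2 - (qint q (2 * (m - a) - 1))\<^sup>2"
    using qint_mult_add_diff [OF q_nonzero, of "2 * m + 1" "2 * (m - a) - 1"]
    by (simp add: algebra_simps)
  have split: "qint q (4 * m - 2 * a)
      = q powi (2 * m - 1) * qint q (2 * (m - a) + 1) + q powi (2 * a - 2 * m - 1) * qint q (2 * m - 1)"
    using qint_add [OF q_nonzero, of "2 * (m - a) + 1" "2 * m - 1"] by (simp add: algebra_simps)
  have double: "?c * qint (q\<^sup>2) k = qint q (2 * k)" for k
    by (rule qint_square_base [OF q_nonzero])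
  have "?c * ?lhs = qint q (2 * m + 2) * (?c * qint (q\<^sup>2) m)"
    by (simp only: mult_ac)
  also have "\<dots> = qint q (2 * m + 2) * qint q (2 * m)"
    unfolding double ..
  also have "\<dots> = qint q (2 * (m - a)) * qint q (2 * (m - a - 1)) + qint q (4 * m - 2 * a) * qint q (2 * (a + 1))"
    unfolding sq1 sq2 sq3 by simp
  also have "\<dots> = (?c * qint (q\<^sup>2) (m - a - 1)) * qint q (2 * (m - a))
      + (q powi (2 * m - 1) * qint q (2 * (m - a) + 1) + q powi (2 * a - 2 * m - 1) * qint q (2 * m - 1))
        * (?c * qint (q\<^sup>2) (a + 1))"
    unfolding double split by (simp only: mult.commute)
  also have "\<dots> = ?c * ?rhs"
    by (simp only: distrib_left distrib_right mult_ac add_ac)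
  finally show ?thesis
    using q_plus_inverse_nonzero by simp
qed

lemma odd_step_identity:
  fixes m a :: int
  shows "qint (q\<^sup>2) m * qint q (2 * m + 3) * q powi (- 2 * a - 2)
    = qint (q\<^sup>2) m * qint q (2 * (m - a) + 1) + q powi (- 2 * m - 3) * qint q (2 * m) * qint (q\<^sup>2) (a + 1)"
proof -
  have split: "qint q (2 * m + 3)
      = q powi (2 * a + 2) * qint q (2 * (m - a) + 1) + q powi (- 2 * (m - a) - 1) * qint q (2 * (a + 1))"
    using qint_add [OF q_nonzero, of "2 * (m - a) + 1" "2 * (a + 1)"] by (simp add: algebra_simps)
  have "q powi (2 * a + 2) * q powi (- 2 * a - 2) = q powi 0"
    by (rule power_int_mult_eq) simp
  moreover have "q powi (- 2 * (m - a) - 1) * q powi (- 2 * a - 2) = q powi (- 2 * m - 3)"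
    by (rule power_int_mult_eq) simp
  moreover have "qint (q\<^sup>2) m * qint q (2 * (a + 1)) = qint q (2 * m) * qint (q\<^sup>2) (a + 1)"
    unfolding qint_square_base [OF q_nonzero, symmetric] by (simp only: mult_ac)
  moreover have "qint (q\<^sup>2) m * qint q (2 * m + 3) * q powi (- 2 * a - 2)
      = qint (q\<^sup>2) m * (q powi (2 * a + 2) * q powi (- 2 * a - 2)) * qint q (2 * (m - a) + 1)
        + (q powi (- 2 * (m - a) - 1) * q powi (- 2 * a - 2)) * (qint (q\<^sup>2) m * qint q (2 * (a + 1)))"
    unfolding split by (simp only: distrib_left distrib_right mult_ac)
  ultimately show ?thesis
    by (simp only: power_int_0_right mult_1_left mult_1_right mult_ac)
qed

end

section \<open>Gaussian binomial coefficients with integer top\<close>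

(* Unlike qbinom2, this vanishes for 0 \<le> N < k; hence odd_coeff q m m = 0 below, which absorbs
   the boundary terms of the index shifts in the recurrences. *)
definition qgbinom :: "'a::field \<Rightarrow> int \<Rightarrow> nat \<Rightarrow> 'a" where
  "qgbinom r N k = (\<Prod>i<k. qint r (N - int i)) / qfact r k"

lemma qgbinom_0_right [simp]: "qgbinom r N 0 = 1"
  by (simp add: qgbinom_def qfact_def)

lemma qgbinom_eq_0:
  assumes "0 \<le> N" "N < int k"
  shows "qgbinom r N k = 0"
proof -
  have "nat N \<in> {..<k}" "qint r (N - int (nat N)) = 0"
    using assms by auto
  then show ?thesis
    unfolding qgbinom_def by (metis (no_types, lifting) divide_eq_0_iff finite_lessThan prod_zero_iff)
qed

lemma prod_qint_Suc:
  "(\<Prod>i<k. qint r (N + 1 - int i)) * qint r (N + 1 - int k) = qint r (N + 1) * (\<Prod>i<k. qint r (N - int i))"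
proof -
  have "(\<Prod>i<k. qint r (N + 1 - int (Suc i))) = (\<Prod>i<k. qint r (N - int i))"
    by (intro prod.cong refl arg_cong [where f = "qint r"]) simp
  then have "(\<Prod>i<Suc k. qint r (N + 1 - int i)) = qint r (N + 1) * (\<Prod>i<k. qint r (N - int i))"
    by (simp only: prod.lessThan_Suc_shift) simp
  then show ?thesis
    by simp
qed

lemma qgbinom_Suc:
  "qgbinom r N (Suc k) = (\<Prod>i<k. qint r (N - int i)) * qint r (N - int k) / (qfact r k * qint r (int k + 1))"
  by (simp add: qgbinom_def qfact_Suc)

lemma qgbinom_Suc_Suc:
  "qgbinom r (N + 1) (Suc k) = qint r (N + 1) * (\<Prod>i<k. qint r (N - int i)) / (qfact r k * qint r (int k + 1))"
  unfolding qgbinom_Suc [of r "N + 1"] prod_qint_Suc ..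

lemma qgbinom_absorb_comp:
  "qint r (N + 1 - int k) * qgbinom r (N + 1) k = qint r (N + 1) * qgbinom r N k"
  using prod_qint_Suc [of r N k] by (simp add: qgbinom_def mult_ac)

lemma qgbinom_absorption:
  assumes "qfact r (Suc k) \<noteq> 0"
  shows "qint r (int k + 1) * qgbinom r (N + 1) (Suc k) = qint r (N + 1) * qgbinom r N k"
  using assms unfolding qgbinom_Suc_Suc by (simp add: qgbinom_def qfact_Suc)

lemma qgbinom_pascal:
  assumes "r \<noteq> 0" "qfact r (Suc k) \<noteq> 0"
  shows "qgbinom r (N + 1) (Suc k) = r powi (int k + 1) * qgbinom r N (Suc k) + r powi (int k - N) * qgbinom r N k"
proof -
  have "qint r (N + 1) = r powi (int k + 1) * qint r (N - int k) + r powi (int k - N) * qint r (int k + 1)"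
    using qint_add [OF assms(1), of "N - int k" "int k + 1"] by simp
  then show ?thesis
    using assms(2) unfolding qgbinom_Suc_Suc unfolding qgbinom_Suc
    by (simp add: qgbinom_def qfact_Suc field_simps)
qed

lemma prod_qint_mult_qfact:
  assumes "a \<le> N"
  shows "(\<Prod>i<a. qint r (int N - int i)) * qfact r (N - a) = qfact r N"
  using assms
proof (induction a)
  case 0
  then show ?case by simp
next
  case (Suc a)
  have "N - a = Suc (N - Suc a)" "int (N - Suc a) + 1 = int N - int a"
    using Suc.prems by simp_all
  then have "qfact r (N - a) = qfact r (N - Suc a) * qint r (int N - int a)"
    by (simp only: qfact_Suc)
  with Suc show ?case
    by (simp add: prod.lessThan_Suc mult_ac)
qed

lemma (in generic_q) qbinom2_eq_qgbinom: "a \<le> N \<Longrightarrow> qbinom2 q N a = qgbinom (q\<^sup>2) (int N) a"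
  unfolding qbinom2_def qgbinom_def prod_qint_mult_qfact [symmetric, of a N "q\<^sup>2"]
  using qfact_q2_nonzero by simp

section \<open>Three-term recurrences\<close>

lemma gg_odd: "gg q (2 * k + 1) = [:0, 1:] * gg q (2 * k)"
  by (simp add: gg_def)

lemma gg_even_Suc: "gg q (2 * k + 2) = [:- (qint q (2 * int k + 1))\<^sup>2, 0, 1:] * gg q (2 * k)"
proof -
  have "(2 * k + 2) div 2 = Suc k" by simp
  then show ?thesis by (simp add: gg_def algebra_simps)
qed

context generic_q
begin

lemma pdiv_recurrence:
  "smult (qint q (int n + 2)) (pdiv q (n + 2))
    = [:0, 1:] * pdiv q (n + 1) + smult (q powi (- 2 * int n) * qint q (int n - 1)) (pdiv q n)"
proof -
  define F a b \<kappa> where "F = qfact q n" and "a = qint q (int n + 1)" and "b = qint q (int n + 2)"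
    and "\<kappa> = q powi (- 2 * int n) * qint q (int n - 1)"
  have nonzero: "F \<noteq> 0" "a \<noteq> 0" "b \<noteq> 0"
    by (simp_all add: F_def a_def b_def qfact_q_nonzero qint_q_nonzero)
  have pp: "pp q (n + 2) = [:0, 1:] * pp q (n + 1) + smult (\<kappa> * a) (pp q n)"
    using pp.simps(3) [of q n] by (simp add: \<kappa>_def a_def mult_ac)
  have fact1: "qfact q (n + 1) = F * a" and fact2: "qfact q (n + 2) = F * a * b"
    by (simp_all add: qfact_Suc F_def a_def b_def numeral_2_eq_2 add_ac)
  have "smult b (pdiv q (n + 2)) = smult (b * inverse (F * a * b)) (pp q (n + 2))"
    unfolding pdiv_def fact2 by simp
  also have "b * inverse (F * a * b) = inverse (F * a)"
    using nonzero by (simp add: field_simps)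
  also have "smult (inverse (F * a)) (pp q (n + 2))
      = [:0, 1:] * smult (inverse (F * a)) (pp q (n + 1)) + smult (inverse (F * a) * (\<kappa> * a)) (pp q n)"
    unfolding pp by (simp add: smult_add_right)
  also have "inverse (F * a) * (\<kappa> * a) = \<kappa> * inverse F"
    using nonzero by (simp add: field_simps)
  also have "[:0, 1:] * smult (inverse (F * a)) (pp q (n + 1)) + smult (\<kappa> * inverse F) (pp q n)
      = [:0, 1:] * pdiv q (n + 1) + smult \<kappa> (pdiv q n)"
    unfolding pdiv_def fact1 F_def by simp
  finally show ?thesis
    by (simp add: b_def \<kappa>_def)
qed

lemma x_times_gdiv_even:
  "[:0, 1:] * gdiv q (2 * k) = smult (qint q (2 * int k + 1)) (gdiv q (2 * k + 1))"
proof -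
  have "qint q (2 * int k + 1) \<noteq> 0"
    by (simp add: qint_q_nonzero)
  then have "qint q (2 * int k + 1) * inverse (qfact q (2 * k + 1)) = inverse (qfact q (2 * k))"
    using qfact_q_nonzero [of "2 * k"] by (simp add: qfact_Suc [of q "2 * k", simplified])
  then show ?thesis
    unfolding gdiv_def gg_odd by simp
qed

lemma x_times_gdiv_odd:
  "[:0, 1:] * gdiv q (2 * k + 1)
    = smult (qint q (2 * int k + 2)) (gdiv q (2 * k + 2)) + smult (qint q (2 * int k + 1)) (gdiv q (2 * k))"
proof -
  define F a b where "F = qfact q (2 * k)" and "a = qint q (2 * int k + 1)" and "b = qint q (2 * int k + 2)"
  have nonzero: "F \<noteq> 0" "a \<noteq> 0" "b \<noteq> 0"
    by (simp_all add: F_def a_def b_def qfact_q_nonzero qint_q_nonzero)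
  have x_squared: "[:0, 1:] * ([:0, 1:] * gg q (2 * k)) = gg q (2 * k + 2) + smult (a\<^sup>2) (gg q (2 * k))"
    unfolding gg_even_Suc a_def by (simp add: algebra_simps)
  have fact1: "qfact q (2 * k + 1) = F * a" and fact2: "qfact q (2 * k + 2) = F * a * b"
    by (simp_all add: qfact_Suc F_def a_def b_def numeral_2_eq_2 add_ac)
  have "[:0, 1:] * gdiv q (2 * k + 1) = smult (inverse (F * a)) ([:0, 1:] * ([:0, 1:] * gg q (2 * k)))"
    unfolding gdiv_def gg_odd fact1 by simp
  also have "\<dots> = smult (inverse (F * a)) (gg q (2 * k + 2)) + smult (inverse (F * a) * a\<^sup>2) (gg q (2 * k))"
    by (simp only: x_squared smult_add_right smult_smult)
  also have "\<dots> = smult b (gdiv q (2 * k + 2)) + smult a (gdiv q (2 * k))"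
  proof -
    have "b * inverse (F * a * b) = inverse (F * a)" "a * inverse F = inverse (F * a) * a\<^sup>2"
      using nonzero by (simp_all add: field_simps power2_eq_square)
    then show ?thesis
      unfolding gdiv_def fact2 F_def [symmetric] smult_smult by (simp only:)
  qed
  finally show ?thesis
    by (simp add: a_def b_def)
qed

end

section \<open>The expansion of p^(n) in the basis g^(j)\<close>

definition even_coeff :: "'a::field \<Rightarrow> nat \<Rightarrow> nat \<Rightarrow> 'a" where
  "even_coeff q m a = q powi ((3 - 2 * int m) * int a) * qgbinom (q\<^sup>2) (int m - 1) a"

definition odd_coeff :: "'a::field \<Rightarrow> nat \<Rightarrow> nat \<Rightarrow> 'a" where
  "odd_coeff q m a = q powi ((1 - 2 * int m) * int a) * qgbinom (q\<^sup>2) (int m - 1) a"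

definition even_expansion :: "'a::field \<Rightarrow> nat \<Rightarrow> 'a poly" where
  "even_expansion q m = (\<Sum>a<m. smult (even_coeff q m a) (gdiv q (2 * (m - a))))"

definition odd_expansion :: "'a::field \<Rightarrow> nat \<Rightarrow> 'a poly" where
  "odd_expansion q m = (\<Sum>a<m. smult (odd_coeff q m a) (gdiv q (2 * (m - a) + 1)))"

lemma even_coeff_0_right [simp]: "even_coeff q m 0 = 1"
  by (simp add: even_coeff_def)

lemma odd_coeff_0_right [simp]: "odd_coeff q m 0 = 1"
  by (simp add: odd_coeff_def)

lemma odd_coeff_diag: "1 \<le> m \<Longrightarrow> odd_coeff q m m = 0"
  by (simp add: odd_coeff_def qgbinom_eq_0)

lemma smult_sum_right: "smult c (\<Sum>i\<in>A. f i) = (\<Sum>i\<in>A. smult c (f i))"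
  by (induction A rule: infinite_finite_induct) (simp_all add: smult_add_right)

lemma sum_lessThan_shift_vanishing:
  assumes "f m = 0"
  shows "(\<Sum>a<m. f a) = f 0 + (\<Sum>a<m. f (Suc a))"
proof -
  have "(\<Sum>a<Suc m. f a) = (\<Sum>a<m. f a)"
    using assms by simp
  then show ?thesis
    using sum.lessThan_Suc_shift [of f m] by simp
qed

context generic_q
begin

lemma qint_q2_times_qgbinom_pred:
  "qint (q\<^sup>2) (int m) * qgbinom (q\<^sup>2) (int m - 1) a = qint (q\<^sup>2) (int a + 1) * qgbinom (q\<^sup>2) (int m) (Suc a)"
  using qgbinom_absorption [OF qfact_q2_nonzero, of a "int m - 1"] by simp

lemma qint_q2_times_odd_coeff:
  "qint (q\<^sup>2) (int m) * odd_coeff q m a = q powi ((1 - 2 * int m) * (int a + 1))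
    * qgbinom (q\<^sup>2) (int m) (Suc a) * (q powi (2 * int m - 1) * qint (q\<^sup>2) (int a + 1))"
proof -
  have "q powi ((1 - 2 * int m) * int a) = q powi ((1 - 2 * int m) * (int a + 1)) * q powi (2 * int m - 1)"
    by (rule power_int_mult_eq [symmetric]) (simp add: algebra_simps)
  then show ?thesis
    using qint_q2_times_qgbinom_pred [of m a] by (simp add: odd_coeff_def mult_ac)
qed

lemma qint_q2_times_even_coeff:
  "qint (q\<^sup>2) (int m) * even_coeff q m a = q powi ((1 - 2 * int m) * (int a + 1))
    * qgbinom (q\<^sup>2) (int m) (Suc a) * (q powi (2 * int a + 2 * int m - 1) * qint (q\<^sup>2) (int a + 1))"
proof -
  have "q powi ((3 - 2 * int m) * int a) = q powi ((1 - 2 * int m) * (int a + 1)) * q powi (2 * int a + 2 * int m - 1)"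
    by (rule power_int_mult_eq [symmetric]) (simp add: algebra_simps)
  then show ?thesis
    using qint_q2_times_qgbinom_pred [of m a] by (simp add: even_coeff_def mult_ac)
qed

lemma even_coeff_step:
  assumes "a < m"
  shows "qint q (2 * int m + 2) * even_coeff q (m + 1) (a + 1)
    = odd_coeff q m (a + 1) * qint q (2 * (int m - int a))
      + odd_coeff q m a * qint q (2 * (int m - int a) + 1)
      + q powi (- 4 * int m) * qint q (2 * int m - 1) * even_coeff q m a"
    (is "?lhs = ?rhs")
proof -
  define P B Qm where "P = q powi ((1 - 2 * int m) * (int a + 1))"
    and "B = qgbinom (q\<^sup>2) (int m) (Suc a)" and "Qm = qint (q\<^sup>2) (int m)"
  have "Qm \<noteq> 0"
    using assms by (simp add: Qm_def qint_q2_nonzero)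
  have shifted: "even_coeff q (m + 1) (a + 1) = P * B"
    by (simp add: even_coeff_def P_def B_def algebra_simps)
  have odd_next: "Qm * odd_coeff q m (a + 1) = P * B * qint (q\<^sup>2) (int m - int a - 1)"
    using qgbinom_absorb_comp [of "q\<^sup>2" "int m - 1" "Suc a"]
    by (simp add: odd_coeff_def P_def B_def Qm_def algebra_simps)
  have odd_same: "Qm * odd_coeff q m a = P * B * (q powi (2 * int m - 1) * qint (q\<^sup>2) (int a + 1))"
    unfolding Qm_def P_def B_def by (rule qint_q2_times_odd_coeff)
  have even_same: "Qm * even_coeff q m a = P * B * (q powi (2 * int a + 2 * int m - 1) * qint (q\<^sup>2) (int a + 1))"
    unfolding Qm_def P_def B_def by (rule qint_q2_times_even_coeff)
  have powers: "q powi (- 4 * int m) * q powi (2 * int a + 2 * int m - 1) = q powi (2 * int a - 2 * int m - 1)"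
    by (rule power_int_mult_eq) simp
  have "Qm * ?rhs = (Qm * odd_coeff q m (a + 1)) * qint q (2 * (int m - int a))
      + (Qm * odd_coeff q m a) * qint q (2 * (int m - int a) + 1)
      + q powi (- 4 * int m) * qint q (2 * int m - 1) * (Qm * even_coeff q m a)"
    by (simp add: algebra_simps)
  also have "\<dots> = P * B * (qint (q\<^sup>2) (int m - int a - 1) * qint q (2 * (int m - int a))
      + q powi (2 * int m - 1) * qint (q\<^sup>2) (int a + 1) * qint q (2 * (int m - int a) + 1)
      + q powi (2 * int a - 2 * int m - 1) * qint q (2 * int m - 1) * qint (q\<^sup>2) (int a + 1))"
    unfolding odd_next odd_same even_same powers [symmetric] by (simp add: algebra_simps)
  also have "\<dots> = P * B * (Qm * qint q (2 * int m + 2))"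
    using even_step_identity [of "int m" "int a"] by (simp add: Qm_def)
  also have "\<dots> = Qm * ?lhs"
    unfolding shifted by (simp add: mult_ac)
  finally show ?thesis
    using \<open>Qm \<noteq> 0\<close> by simp
qed

lemma odd_coeff_step:
  assumes "a < m"
  shows "qint q (2 * int m + 3) * odd_coeff q (m + 1) (a + 1)
    = even_coeff q (m + 1) (a + 1) * qint q (2 * (int m - int a) + 1)
      + q powi (- 2 * (2 * int m + 1)) * qint q (2 * int m) * odd_coeff q m a"
    (is "?lhs = ?rhs")
proof -
  define P B Qm where "P = q powi ((1 - 2 * int m) * (int a + 1))"
    and "B = qgbinom (q\<^sup>2) (int m) (Suc a)" and "Qm = qint (q\<^sup>2) (int m)"
  have "Qm \<noteq> 0"
    using assms by (simp add: Qm_def qint_q2_nonzero)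
  have even_next: "even_coeff q (m + 1) (a + 1) = P * B"
    by (simp add: even_coeff_def P_def B_def algebra_simps)
  have odd_next: "odd_coeff q (m + 1) (a + 1) = P * q powi (- 2 * int a - 2) * B"
  proof -
    have "q powi ((1 - 2 * int (m + 1)) * int (a + 1)) = P * q powi (- 2 * int a - 2)"
      unfolding P_def by (rule power_int_mult_eq [symmetric]) (simp add: algebra_simps)
    then show ?thesis
      by (simp add: odd_coeff_def B_def)
  qed
  have odd_same: "Qm * odd_coeff q m a = P * B * (q powi (2 * int m - 1) * qint (q\<^sup>2) (int a + 1))"
    unfolding Qm_def P_def B_def by (rule qint_q2_times_odd_coeff)
  have powers: "q powi (- 2 * (2 * int m + 1)) * q powi (2 * int m - 1) = q powi (- 2 * int m - 3)"
    by (rule power_int_mult_eq) simp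
  have "Qm * ?lhs = P * B * (Qm * qint q (2 * int m + 3) * q powi (- 2 * int a - 2))"
    unfolding odd_next by (simp add: mult_ac)
  also have "\<dots> = P * B * (Qm * qint q (2 * (int m - int a) + 1)
      + q powi (- 2 * int m - 3) * qint q (2 * int m) * qint (q\<^sup>2) (int a + 1))"
    using odd_step_identity [of "int m" "int a"] by (simp add: Qm_def)
  also have "\<dots> = Qm * even_coeff q (m + 1) (a + 1) * qint q (2 * (int m - int a) + 1)
      + q powi (- 2 * (2 * int m + 1)) * qint q (2 * int m) * (Qm * odd_coeff q m a)"
    unfolding even_next odd_same powers [symmetric] by (simp add: algebra_simps)
  also have "\<dots> = Qm * ?rhs"
    by (simp add: algebra_simps)
  finally show ?thesis
    using \<open>Qm \<noteq> 0\<close> by simp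
qed

lemma even_expansion_recurrence:
  assumes "1 \<le> m"
  shows "smult (qint q (2 * int m + 2)) (even_expansion q (m + 1))
    = [:0, 1:] * odd_expansion q m + smult (q powi (- 4 * int m) * qint q (2 * int m - 1)) (even_expansion q m)"
proof -
  let ?G = "gdiv q" and ?c = "qint q (2 * int m + 2)" and ?\<kappa> = "q powi (- 4 * int m) * qint q (2 * int m - 1)"
  define up where "up a = smult (odd_coeff q m a * qint q (2 * (int m - int a) + 2)) (?G (2 * (m - a) + 2))" for a
  define same where "same a = smult (odd_coeff q m a * qint q (2 * (int m - int a) + 1)
      + ?\<kappa> * even_coeff q m a) (?G (2 * (m - a)))" for a
  have "[:0, 1:] * odd_expansion q m + smult ?\<kappa> (even_expansion q m)
      = (\<Sum>a<m. up a + same a)"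
    unfolding odd_expansion_def even_expansion_def sum_distrib_left smult_sum_right sum.distrib [symmetric]
  proof (intro sum.cong refl)
    fix a assume "a \<in> {..<m}"
    then have "[:0, 1:] * gdiv q (2 * (m - a) + 1)
        = smult (qint q (2 * (int m - int a) + 2)) (?G (2 * (m - a) + 2))
          + smult (qint q (2 * (int m - int a) + 1)) (?G (2 * (m - a)))"
      using x_times_gdiv_odd [of "m - a"] by simp
    then show "[:0, 1:] * smult (odd_coeff q m a) (gdiv q (2 * (m - a) + 1))
        + smult ?\<kappa> (smult (even_coeff q m a) (gdiv q (2 * (m - a)))) = up a + same a"
      by (simp add: up_def same_def smult_add_right smult_add_left mult_ac)
  qed
  also have "\<dots> = up 0 + (\<Sum>a<m. up (Suc a) + same a)"
    using sum_lessThan_shift_vanishing [of up m]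
    by (simp add: sum.distrib up_def odd_coeff_diag [OF assms])
  also have "\<dots> = smult ?c (?G (2 * (m + 1)))
      + (\<Sum>a<m. smult (?c * even_coeff q (m + 1) (a + 1)) (?G (2 * (m - a))))"
  proof -
    have "up (Suc a) + same a = smult (?c * even_coeff q (m + 1) (a + 1)) (?G (2 * (m - a)))"
      if "a < m" for a
    proof -
      have "2 * (m - Suc a) + 2 = 2 * (m - a)" "2 * (int m - int (Suc a)) + 2 = 2 * (int m - int a)"
        using that by simp_all
      then show ?thesis
        using even_coeff_step [OF that]
        by (simp add: up_def same_def smult_add_left [symmetric] algebra_simps)
    qed
    then show ?thesis
      by (simp add: up_def algebra_simps)
  qed
  also have "\<dots> = smult ?c (even_expansion q (m + 1))"
    unfolding even_expansion_def Suc_eq_plus1 [symmetric] sum.lessThan_Suc_shift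
    by (simp add: smult_add_right smult_sum_right)
  finally show ?thesis ..
qed

lemma odd_expansion_recurrence:
  "smult (qint q (2 * int m + 3)) (odd_expansion q (m + 1))
    = [:0, 1:] * even_expansion q (m + 1) + smult (q powi (- 2 * (2 * int m + 1)) * qint q (2 * int m)) (odd_expansion q m)"
proof -
  let ?G = "gdiv q" and ?c = "qint q (2 * int m + 3)" and ?\<kappa> = "q powi (- 2 * (2 * int m + 1)) * qint q (2 * int m)"
  define up where "up a = smult (even_coeff q (m + 1) a * qint q (2 * (int m + 1 - int a) + 1)) (?G (2 * (m + 1 - a) + 1))" for a
  have "[:0, 1:] * even_expansion q (m + 1) = (\<Sum>a<m + 1. up a)"
    unfolding even_expansion_def sum_distrib_left
  proof (intro sum.cong refl)
    fix a assume "a \<in> {..<m + 1}"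
    then show "[:0, 1:] * smult (even_coeff q (m + 1) a) (?G (2 * (m + 1 - a))) = up a"
      using x_times_gdiv_even [of "m + 1 - a"] by (simp add: up_def mult_ac)
  qed
  also have "\<dots> = up 0 + (\<Sum>a<m. up (Suc a))"
    unfolding Suc_eq_plus1 [symmetric] sum.lessThan_Suc_shift ..
  finally have "[:0, 1:] * even_expansion q (m + 1) + smult ?\<kappa> (odd_expansion q m)
      = up 0 + (\<Sum>a<m. up (Suc a) + smult (?\<kappa> * odd_coeff q m a) (?G (2 * (m - a) + 1)))"
    by (simp add: odd_expansion_def smult_sum_right sum.distrib)
  also have "\<dots> = smult ?c (?G (2 * (m + 1) + 1))
      + (\<Sum>a<m. smult (?c * odd_coeff q (m + 1) (a + 1)) (?G (2 * (m - a) + 1)))"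
  proof -
    have "up (Suc a) + smult (?\<kappa> * odd_coeff q m a) (?G (2 * (m - a) + 1))
        = smult (?c * odd_coeff q (m + 1) (a + 1)) (?G (2 * (m - a) + 1))"
      if "a < m" for a
    proof -
      have "2 * (m + 1 - Suc a) + 1 = 2 * (m - a) + 1" "2 * (int m + 1 - int (Suc a)) + 1 = 2 * (int m - int a) + 1"
        using that by simp_all
      then show ?thesis
        using odd_coeff_step [OF that]
        by (simp add: up_def smult_add_left [symmetric] algebra_simps)
    qed
    then show ?thesis
      by (simp add: up_def algebra_simps)
  qed
  also have "\<dots> = smult ?c (odd_expansion q (m + 1))"
    unfolding odd_expansion_def Suc_eq_plus1 [symmetric] sum.lessThan_Suc_shift
    by (simp add: smult_add_right smult_sum_right)
  finally show ?thesis ..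
qed

lemma pdiv_2_3: "pdiv q 2 = gdiv q 2" "pdiv q 3 = gdiv q 3"
proof -
  have "pp q 2 = [:-1, 0, 1:]"
    using qint_q_one by (simp add: numeral_2_eq_2 qint_uminus)
  moreover have "gg q 2 = [:-1, 0, 1:]"
    using qint_q_one by (simp add: gg_def)
  moreover have "pp q 3 = [:0, 1:] * pp q 2" "gg q 3 = [:0, 1:] * gg q 2"
    using gg_odd [of q 1] by (simp_all add: numeral_3_eq_3 numeral_2_eq_2)
  ultimately show "pdiv q 2 = gdiv q 2" "pdiv q 3 = gdiv q 3"
    by (simp_all add: pdiv_def gdiv_def)
qed

lemma pdiv_eq_expansion:
  assumes "1 \<le> m"
  shows "pdiv q (2 * m) = even_expansion q m \<and> pdiv q (2 * m + 1) = odd_expansion q m"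
  using assms
proof (induction m rule: dec_induct)
  case base
  then show ?case
    by (simp add: even_expansion_def odd_expansion_def pdiv_2_3)
next
  case (step m)
  have "smult (qint q (2 * int m + 2)) (pdiv q (2 * (m + 1))) = smult (qint q (2 * int m + 2)) (even_expansion q (m + 1))"
    using pdiv_recurrence [of "2 * m"] even_expansion_recurrence [OF step.hyps(1)] step.IH
    by (simp add: algebra_simps)
  then have even: "pdiv q (2 * (m + 1)) = even_expansion q (m + 1)"
    by (rule smult_cancel [rotated]) (simp add: qint_q_nonzero)
  have "smult (qint q (2 * int m + 3)) (pdiv q (2 * (m + 1) + 1)) = smult (qint q (2 * int m + 3)) (odd_expansion q (m + 1))"
    using pdiv_recurrence [of "2 * m + 1"] odd_expansion_recurrence [of m] step.IH even
    by (simp add: algebra_simps)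
  then have "pdiv q (2 * (m + 1) + 1) = odd_expansion q (m + 1)"
    by (rule smult_cancel [rotated]) (simp add: qint_q_nonzero)
  with even show ?case
    by simp
qed

lemma even_expansion_eq:
  "even_expansion q m
    = (\<Sum>a<m. smult (q powi ((3 - 2 * int m) * int a) * qbinom2 q (m - 1) a) (gdiv q (2 * m - 2 * a)))"
  unfolding even_expansion_def even_coeff_def
proof (intro sum.cong refl)
  fix a assume "a \<in> {..<m}"
  then have "qbinom2 q (m - 1) a = qgbinom (q\<^sup>2) (int m - 1) a" "2 * m - 2 * a = 2 * (m - a)"
    using qbinom2_eq_qgbinom [of a "m - 1"] by simp_all
  then show "smult (q powi ((3 - 2 * int m) * int a) * qgbinom (q\<^sup>2) (int m - 1) a) (gdiv q (2 * (m - a)))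
      = smult (q powi ((3 - 2 * int m) * int a) * qbinom2 q (m - 1) a) (gdiv q (2 * m - 2 * a))"
    by simp
qed

lemma odd_expansion_eq:
  "odd_expansion q m
    = (\<Sum>a<m. smult (q powi ((1 - 2 * int m) * int a) * qbinom2 q (m - 1) a) (gdiv q (2 * m - 2 * a + 1)))"
  unfolding odd_expansion_def odd_coeff_def
proof (intro sum.cong refl)
  fix a assume "a \<in> {..<m}"
  then have "qbinom2 q (m - 1) a = qgbinom (q\<^sup>2) (int m - 1) a" "2 * m - 2 * a = 2 * (m - a)"
    using qbinom2_eq_qgbinom [of a "m - 1"] by simp_all
  then show "smult (q powi ((1 - 2 * int m) * int a) * qgbinom (q\<^sup>2) (int m - 1) a) (gdiv q (2 * (m - a) + 1))
      = smult (q powi ((1 - 2 * int m) * int a) * qbinom2 q (m - 1) a) (gdiv q (2 * m - 2 * a + 1))"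
    by simp
qed

end

section \<open>The g^(j) at odd quantum integers\<close>

definition qfact_ratio :: "'a::field \<Rightarrow> nat \<Rightarrow> 'a" where
  "qfact_ratio q n = (\<Prod>j=1..n. q ^ j + inverse (q ^ j))"

lemma qfact_ratio_Suc: "qfact_ratio q (Suc n) = qfact_ratio q n * (q ^ Suc n + inverse (q ^ Suc n))"
  by (simp add: qfact_ratio_def)

lemma qfact_ratio_eq:
  assumes "(q::'a::field) \<noteq> 0"
  shows "(q + inverse q) ^ n * qfact (q\<^sup>2) n = qfact q n * qfact_ratio q n"
proof (induction n)
  case 0
  then show ?case by (simp add: qfact_ratio_def qfact_def)
next
  case (Suc n)
  have power: "q powi (int n + 1) = q ^ Suc n"
    using power_int_of_nat [of q "Suc n"] by (simp add: add.commute)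
  have step: "(q + inverse q) * qint (q\<^sup>2) (int n + 1) = (q ^ Suc n + inverse (q ^ Suc n)) * qint q (int n + 1)"
    unfolding qint_square_base [OF assms] qint_double [OF assms] power_int_minus power ..
  have "(q + inverse q) ^ Suc n * qfact (q\<^sup>2) (Suc n)
      = ((q + inverse q) ^ n * qfact (q\<^sup>2) n) * ((q + inverse q) * qint (q\<^sup>2) (int n + 1))"
    by (simp add: qfact_Suc mult_ac)
  also have "\<dots> = qfact q n * qfact_ratio q n * ((q ^ Suc n + inverse (q ^ Suc n)) * qint q (int n + 1))"
    unfolding Suc.IH step ..
  also have "\<dots> = qfact q (Suc n) * qfact_ratio q (Suc n)"
    by (simp add: qfact_Suc qfact_ratio_Suc mult_ac)
  finally show ?case .
qed

lemma poly_gg_even_at_qint: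
  assumes "(q::'a::field) \<noteq> 0"
  shows "poly (gg q (2 * m)) (qint q (2 * l - 1))
    = (q + inverse q) ^ (2 * m) * (\<Prod>j<2 * m. qint (q\<^sup>2) (l + int m - 1 - int j))"
proof (induction m)
  case 0
  then show ?case by (simp add: gg_def)
next
  case (Suc m)
  let ?x = "qint q (2 * l - 1)" and ?c = "q + inverse q" and ?f = "\<lambda>j. qint (q\<^sup>2) (l + int m - int j)"
  have "?x\<^sup>2 - (qint q (2 * int m + 1))\<^sup>2 = qint q (2 * (l + int m)) * qint q (2 * (l - int m - 1))"
    using qint_mult_add_diff [OF assms, of "2 * l - 1" "2 * int m + 1"] by (simp add: algebra_simps)
  also have "\<dots> = ?c\<^sup>2 * (qint (q\<^sup>2) (l + int m) * qint (q\<^sup>2) (l - int m - 1))"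
    unfolding qint_square_base [OF assms, symmetric] by (simp add: power2_eq_square mult_ac)
  finally have factor: "?x\<^sup>2 - (qint q (2 * int m + 1))\<^sup>2 = \<dots>" .
  have "(\<Prod>j<Suc (Suc (2 * m)). ?f j) = ?f 0 * (\<Prod>j<2 * m. ?f (Suc j)) * ?f (Suc (2 * m))"
    unfolding prod.lessThan_Suc [of _ "Suc (2 * m)"] prod.lessThan_Suc_shift [of _ "2 * m"] ..
  moreover have "(\<Prod>j<2 * m. ?f (Suc j)) = (\<Prod>j<2 * m. qint (q\<^sup>2) (l + int m - 1 - int j))"
    by (intro prod.cong refl arg_cong [where f = "qint (q\<^sup>2)"]) simp
  ultimately have product: "(\<Prod>j<2 * Suc m. qint (q\<^sup>2) (l + int (Suc m) - 1 - int j))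
      = qint (q\<^sup>2) (l + int m) * (\<Prod>j<2 * m. qint (q\<^sup>2) (l + int m - 1 - int j)) * qint (q\<^sup>2) (l - int m - 1)"
    by (simp add: algebra_simps)
  have gg_step: "gg q (2 * Suc m) = [:- (qint q (2 * int m + 1))\<^sup>2, 0, 1:] * gg q (2 * m)"
    using gg_even_Suc [of q m] by simp
  have "poly (gg q (2 * Suc m)) ?x = (?x\<^sup>2 - (qint q (2 * int m + 1))\<^sup>2) * poly (gg q (2 * m)) ?x"
    unfolding gg_step by (simp add: algebra_simps power2_eq_square)
  then show ?case
    unfolding factor product Suc.IH by (simp add: power_add power2_eq_square mult_ac)
qed

lemma qint_square_base_add_plus_diff:
  assumes "(q::'a::field) \<noteq> 0"
  shows "(q + inverse q) * (qint (q\<^sup>2) (l + k) + qint (q\<^sup>2) (l - k - 1))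
    = (q powi (2 * k + 1) + q powi (- (2 * k + 1))) * qint q (2 * l - 1)"
proof -
  have "(q + inverse q) * (qint (q\<^sup>2) (l + k) + qint (q\<^sup>2) (l - k - 1))
      = qint q (2 * (l + k)) + qint q (2 * (l - k - 1))"
    by (simp add: distrib_left qint_square_base [OF assms])
  then show ?thesis
    using qint_add_plus_diff [OF assms, of "2 * l - 1" "2 * k + 1"] by (simp add: algebra_simps)
qed

context generic_q
begin

lemma poly_gdiv_even_at_qint:
  "poly (gdiv q (2 * m)) (qint q (2 * l - 1)) = qfact_ratio q (2 * m) * qgbinom (q\<^sup>2) (l + int m - 1) (2 * m)"
  using qfact_ratio_eq [OF q_nonzero, of "2 * m"] qfact_q_nonzero [of "2 * m"] qfact_q2_nonzero [of "2 * m"]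
  unfolding gdiv_def poly_smult poly_gg_even_at_qint [OF q_nonzero] qgbinom_def
  by (simp add: field_simps)

lemma poly_gdiv_odd_at_qint:
  "poly (gdiv q (2 * m + 1)) (qint q (2 * l - 1))
    = qfact_ratio q (2 * m) * (qgbinom (q\<^sup>2) (l + int m) (2 * m + 1) + qgbinom (q\<^sup>2) (l + int m - 1) (2 * m + 1))"
proof -
  let ?x = "qint q (2 * l - 1)" and ?c = "q + inverse q"
  define s where "s = q powi (2 * int m + 1) + q powi (- (2 * int m + 1))"
  define P where "P = (\<Prod>j<2 * m. qint (q\<^sup>2) (l + int m - 1 - int j))"
  have sum_top: "?c * (qint (q\<^sup>2) (l + int m) + qint (q\<^sup>2) (l - int m - 1)) = s * ?x"
    unfolding s_def by (rule qint_square_base_add_plus_diff [OF q_nonzero])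
  have last_factor: "?c * qint (q\<^sup>2) (2 * int m + 1) = s * qint q (2 * int m + 1)"
    using qint_square_base [OF q_nonzero, of "2 * int m + 1"] qint_double [OF q_nonzero, of "2 * int m + 1"]
    by (simp add: s_def)
  have binomials: "qgbinom (q\<^sup>2) (l + int m) (2 * m + 1) + qgbinom (q\<^sup>2) (l + int m - 1) (2 * m + 1)
      = (qint (q\<^sup>2) (l + int m) + qint (q\<^sup>2) (l - int m - 1)) * P / (qfact (q\<^sup>2) (2 * m) * qint (q\<^sup>2) (2 * int m + 1))"
    using qgbinom_Suc_Suc [of "q\<^sup>2" "l + int m - 1" "2 * m"] qgbinom_Suc [of "q\<^sup>2" "l + int m - 1" "2 * m"]
    by (simp add: P_def add_divide_distrib algebra_simps)
  have nonzero: "?c \<noteq> 0" "s \<noteq> 0" "qint (q\<^sup>2) (2 * int m + 1) \<noteq> 0" "qint q (2 * int m + 1) \<noteq> 0"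
    using last_factor q_plus_inverse_nonzero qint_q2_nonzero [of "2 * int m + 1"] qint_q_nonzero [of "2 * int m + 1"]
    by auto
  have ratio: "qfact_ratio q (2 * m) = ?c ^ (2 * m) * qfact (q\<^sup>2) (2 * m) / qfact q (2 * m)"
    using qfact_ratio_eq [OF q_nonzero, of "2 * m"] qfact_q_nonzero [of "2 * m"] by (simp add: field_simps)
  have "qfact q (2 * m + 1) = qfact q (2 * m) * qint q (2 * int m + 1)"
    by (simp add: qfact_Suc)
  then have "poly (gdiv q (2 * m + 1)) ?x = ?x * ?c ^ (2 * m) * P / (qfact q (2 * m) * qint q (2 * int m + 1))"
    unfolding gdiv_def gg_odd poly_smult poly_mult poly_gg_even_at_qint [OF q_nonzero] P_def
    by (simp add: field_simps)
  also have "\<dots> = qfact_ratio q (2 * m) * (s * ?x * P / (qfact (q\<^sup>2) (2 * m) * (s * qint q (2 * int m + 1))))"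
    unfolding ratio using nonzero qfact_q_nonzero [of "2 * m"] qfact_q2_nonzero [of "2 * m"]
    by (simp add: field_simps)
  also have "\<dots> = qfact_ratio q (2 * m) * (?c * (qint (q\<^sup>2) (l + int m) + qint (q\<^sup>2) (l - int m - 1)) * P
      / (qfact (q\<^sup>2) (2 * m) * (?c * qint (q\<^sup>2) (2 * int m + 1))))"
    unfolding sum_top last_factor ..
  also have "\<dots> = qfact_ratio q (2 * m) * (qgbinom (q\<^sup>2) (l + int m) (2 * m + 1) + qgbinom (q\<^sup>2) (l + int m - 1) (2 * m + 1))"
    unfolding binomials using nonzero by (simp add: mult.assoc)
  finally show ?thesis .
qed

end

section \<open>Laurent polynomials in q\<close>

lemma map_poly_of_int_add:
  "map_poly (of_int :: int \<Rightarrow> 'a::ring_1) (f + g) = map_poly of_int f + map_poly of_int g"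
  by (rule poly_eqI) (simp add: coeff_map_poly)

lemma map_poly_of_int_mult:
  "map_poly (of_int :: int \<Rightarrow> 'a::comm_ring_1) (f * g) = map_poly of_int f * map_poly of_int g"
  by (induction f) (simp_all add: map_poly_pCons map_poly_smult map_poly_of_int_add)

lemma in_Zq_of_int: "in_Zq q (of_int k)"
proof -
  have "of_int k = poly (map_poly of_int [:k:]) q / q ^ 0"
    by (simp add: map_poly_pCons)
  then show ?thesis
    unfolding in_Zq_def by blast
qed

lemma in_Zq_power_int: "in_Zq q (q powi k)"
proof (cases "k \<ge> 0")
  case True
  then have "q powi k = poly (map_poly of_int (monom 1 (nat k))) q / q ^ 0"
    by (simp add: map_poly_monom poly_monom power_int_nonneg_exp)
  then show ?thesis
    unfolding in_Zq_def by blast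
next
  case False
  then have "q powi k = poly (map_poly of_int 1) q / q ^ nat (- k)"
    by (simp add: power_int_minus_divide flip: power_int_of_nat)
  then show ?thesis
    unfolding in_Zq_def by blast
qed

lemma in_Zq_mult:
  assumes "in_Zq q c" "in_Zq q d"
  shows "in_Zq q (c * d)"
proof -
  obtain f N g M where "c = poly (map_poly of_int f) q / q ^ N" "d = poly (map_poly of_int g) q / q ^ M"
    using assms unfolding in_Zq_def by blast
  then have "c * d = poly (map_poly of_int (f * g)) q / q ^ (N + M)"
    by (simp add: map_poly_of_int_mult power_add)
  then show ?thesis
    unfolding in_Zq_def by blast
qed

lemma in_Zq_add:
  assumes "q \<noteq> 0" "in_Zq q c" "in_Zq q d"
  shows "in_Zq q (c + d)"
proof -
  obtain f N g M where c: "c = poly (map_poly of_int f) q / q ^ N" and d: "d = poly (map_poly of_int g) q / q ^ M"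
    using assms(2,3) unfolding in_Zq_def by blast
  have "c + d = poly (map_poly of_int (f * monom 1 M + g * monom 1 N)) q / q ^ (N + M)"
    unfolding c d using assms(1) by (simp add: map_poly_of_int_add map_poly_of_int_mult map_poly_monom poly_monom
        field_simps power_add)
  then show ?thesis
    unfolding in_Zq_def by blast
qed

lemma in_Zq_uminus: "in_Zq q c \<Longrightarrow> in_Zq q (- c)"
  using in_Zq_mult [OF in_Zq_of_int [of q "- 1"]] by simp

lemma in_Zq_diff: "q \<noteq> 0 \<Longrightarrow> in_Zq q c \<Longrightarrow> in_Zq q d \<Longrightarrow> in_Zq q (c - d)"
  using in_Zq_add [of q c "- d"] in_Zq_uminus [of q d] by simp

lemma in_Zq_sum: "q \<noteq> 0 \<Longrightarrow> (\<And>i. i \<in> A \<Longrightarrow> in_Zq q (f i)) \<Longrightarrow> in_Zq q (\<Sum>i\<in>A. f i)"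
  by (induction A rule: infinite_finite_induct) (auto intro: in_Zq_add simp: in_Zq_of_int [of q 0, simplified])

lemma in_Zq_prod: "(\<And>i. i \<in> A \<Longrightarrow> in_Zq q (f i)) \<Longrightarrow> in_Zq q (\<Prod>i\<in>A. f i)"
  by (induction A rule: infinite_finite_induct) (auto intro: in_Zq_mult simp: in_Zq_of_int [of q 1, simplified])

lemma in_Zq_power_int_base:
  assumes "in_Zq q r" "in_Zq q (inverse r)"
  shows "in_Zq q (r powi k)"
proof -
  have "in_Zq q (s ^ n)" if "in_Zq q s" for s n
    using in_Zq_prod [of "{..<n}" q "\<lambda>_. s"] that by simp
  then show ?thesis
    using assms by (simp add: power_int_def)
qed

lemma qint_eq_sum:
  assumes "(r::'a::field) - inverse r \<noteq> 0"
  shows "qint r (int n) = (\<Sum>i<n. r powi (int n - 1 - 2 * int i))"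
proof (induction n)
  case 0
  then show ?case by simp
next
  case (Suc n)
  have "r \<noteq> 0"
    using assms by auto
  have step: "qint r (int (Suc n)) = r * qint r (int n) + r powi (- int n)"
    using qint_add [OF \<open>r \<noteq> 0\<close>, of "int n" 1] assms by (simp add: qint_one add.commute)
  have shift: "r * (\<Sum>i<n. r powi (int n - 1 - 2 * int i)) = (\<Sum>i<n. r powi (int (Suc n) - 1 - 2 * int i))"
    unfolding sum_distrib_left
  proof (intro sum.cong refl)
    fix i
    show "r * r powi (int n - 1 - 2 * int i) = r powi (int (Suc n) - 1 - 2 * int i)"
      using power_int_add_1' [of r "int n - 1 - 2 * int i"] \<open>r \<noteq> 0\<close> by (simp add: algebra_simps)
  qed
  show ?case
    unfolding step Suc.IH shift by simp
qed

lemma in_Zq_qint: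
  assumes "q \<noteq> 0" "in_Zq q r" "in_Zq q (inverse r)"
  shows "in_Zq q (qint r k)"
proof (cases "r - inverse r = 0")
  case True
  then show ?thesis
    using in_Zq_of_int [of q 0] by (simp add: qint_def)
next
  case False
  have "in_Zq q (qint r (int n))" for n
    unfolding qint_eq_sum [OF False]
    by (intro in_Zq_sum [OF assms(1)] in_Zq_power_int_base assms(2,3))
  then show ?thesis
    by (metis in_Zq_uminus nonneg_int_cases qint_uminus minus_minus le_cases neg_0_le_iff_le)
qed

lemma in_Zq_qgbinom:
  assumes "q \<noteq> 0" "r \<noteq> 0" "in_Zq q r" "in_Zq q (inverse r)" "\<And>n. qfact r n \<noteq> 0"
  shows "in_Zq q (qgbinom r N k)"
proof (induction k arbitrary: N)
  case 0
  show ?case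
    using in_Zq_of_int [of q 1] by simp
next
  case (Suc k)
  have pascal: "qgbinom r (N + 1) (Suc k) = r powi (int k + 1) * qgbinom r N (Suc k) + r powi (int k - N) * qgbinom r N k" for N
    by (rule qgbinom_pascal [OF assms(2,5)])
  have powers: "in_Zq q (r powi j)" for j
    by (rule in_Zq_power_int_base [OF assms(3,4)])
  show ?case
  proof (induction N rule: int_induct [where k = "int k"])
    case base
    show ?case
      using in_Zq_of_int [of q 0] by (simp add: qgbinom_eq_0)
  next
    case (step1 i)
    then show ?case
      unfolding pascal by (intro in_Zq_add [OF assms(1)] in_Zq_mult powers Suc.IH)
  next
    case (step2 i)
    have inverse: "r powi (- int k - 1) * r powi (int k + 1) = 1"
      using assms(2) by (simp flip: power_int_add)
    have "r powi (- int k - 1) * (qgbinom r i (Suc k) - r powi (int k - (i - 1)) * qgbinom r (i - 1) k)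
        = r powi (- int k - 1) * r powi (int k + 1) * qgbinom r (i - 1) (Suc k)"
      using pascal [of "i - 1"] by (simp add: algebra_simps)
    then have "qgbinom r (i - 1) (Suc k)
        = r powi (- int k - 1) * (qgbinom r i (Suc k) - r powi (int k - (i - 1)) * qgbinom r (i - 1) k)"
      unfolding inverse by simp
    then show ?case
      using step2.IH by (simp only:) (intro in_Zq_mult in_Zq_diff [OF assms(1)] powers Suc.IH)
  qed
qed

lemma q_transcendental_imp_nonzero:
  assumes "q_transcendental q"
  shows "q \<noteq> 0"
proof -
  have "poly (map_poly of_int [:0, 1 :: int:]) q \<noteq> 0"
    using assms unfolding q_transcendental_def by simp
  then show ?thesis
    by (simp add: map_poly_pCons)
qed

lemma q_transcendental_imp_not_root_of_unity:
  assumes "q_transcendental q" "0 < n"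
  shows "q ^ n \<noteq> 1"
proof -
  have "coeff (monom 1 n + [:- 1:]) n = (1 :: int)"
    using assms(2) by (cases n) simp_all
  then have "monom 1 n + [:- 1:] \<noteq> (0 :: int poly)"
    by (metis coeff_0 zero_neq_one)
  then have "poly (map_poly of_int (monom 1 n + [:- 1:])) q \<noteq> 0"
    using assms(1) unfolding q_transcendental_def by blast
  then show ?thesis
    by (simp add: map_poly_of_int_add map_poly_monom poly_monom map_poly_pCons)
qed

locale generic_q_char0 = generic_q q for q :: "'a::field_char_0"

lemma generic_q_char0_if_transcendental: "q_transcendental q \<Longrightarrow> generic_q_char0 q"
  by unfold_locales (simp_all add: q_transcendental_imp_nonzero q_transcendental_imp_not_root_of_unity)

context generic_q_char0
begin

lemma in_Zq_q2: "in_Zq q (q\<^sup>2)" "in_Zq q (inverse (q\<^sup>2))"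
  using in_Zq_power_int [of q 2] in_Zq_power_int [of q "- 2"] by (simp_all add: power_int_minus)

lemma in_Zq_qgbinom_q2: "in_Zq q (qgbinom (q\<^sup>2) N k)"
  by (rule in_Zq_qgbinom) (simp_all add: q_nonzero in_Zq_q2 qfact_q2_nonzero)

lemma in_Zq_qint_q: "in_Zq q (qint q k)"
  using in_Zq_power_int [of q 1] in_Zq_power_int [of q "- 1"]
  by (intro in_Zq_qint q_nonzero) (simp_all add: power_int_minus)

lemma in_Zq_qfact_ratio: "in_Zq q (qfact_ratio q n)"
proof -
  have "in_Zq q (q ^ j)" "in_Zq q (inverse (q ^ j))" for j
    using in_Zq_power_int [of q "int j"] in_Zq_power_int [of q "- int j"] by (simp_all add: power_int_minus)
  then show ?thesis
    unfolding qfact_ratio_def by (intro in_Zq_prod in_Zq_add [OF q_nonzero])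
qed

lemma in_Zq_poly_gdiv_at_qint: "in_Zq q (poly (gdiv q n) (qint q (2 * l - 1)))"
proof (cases "even n")
  case True
  then obtain m where n: "n = 2 * m" ..
  show ?thesis
    unfolding n poly_gdiv_even_at_qint by (intro in_Zq_mult in_Zq_qfact_ratio in_Zq_qgbinom_q2)
next
  case False
  then obtain m where n: "n = 2 * m + 1"
    using oddE by blast
  show ?thesis
    unfolding n poly_gdiv_odd_at_qint
    by (intro in_Zq_mult in_Zq_add [OF q_nonzero] in_Zq_qfact_ratio in_Zq_qgbinom_q2)
qed

lemma in_Zq_poly_pdiv_at_qint: "in_Zq q (poly (pdiv q n) (qint q (2 * l - 1)))"
proof -
  have expansion: "in_Zq q (poly (\<Sum>a<m. smult (c a) (gdiv q (g a))) (qint q (2 * l - 1)))"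
    if "\<And>a. in_Zq q (c a)" for c g and m :: nat
    unfolding poly_sum poly_smult
    by (intro in_Zq_sum [OF q_nonzero] in_Zq_mult that in_Zq_poly_gdiv_at_qint)
  have coeffs: "in_Zq q (even_coeff q m a)" "in_Zq q (odd_coeff q m a)" for m a
    by (simp_all add: even_coeff_def odd_coeff_def in_Zq_mult in_Zq_power_int in_Zq_qgbinom_q2)
  obtain m where m: "n = 2 * m \<or> n = 2 * m + 1"
    by (metis even_two_times_div_two odd_two_times_div_two_succ)
  consider "n = 0" | "n = 1" | "1 \<le> m"
    using m by (cases "m = 0") auto
  then show ?thesis
  proof cases
    case 1
    then show ?thesis
      using in_Zq_of_int [of q 1] by (simp add: pdiv_def qfact_def)
  next
    case 2
    then show ?thesis
      using in_Zq_qint_q by (simp add: pdiv_def qfact_def qint_q_one)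
  next
    case 3
    from m show ?thesis
    proof
      assume n: "n = 2 * m"
      show ?thesis
        unfolding n pdiv_eq_expansion [OF 3, THEN conjunct1] even_expansion_def by (intro expansion coeffs)
    next
      assume n: "n = 2 * m + 1"
      show ?thesis
        unfolding n pdiv_eq_expansion [OF 3, THEN conjunct2] odd_expansion_def by (intro expansion coeffs)
    qed
  qed
qed

end

theorem proposition4p4:
  fixes q :: "'a::field_char_0"
  assumes "q_transcendental q"
  shows "(\<forall>m::nat. m \<ge> 1 \<longrightarrow>
           pdiv q (2*m) = (\<Sum>a<m. smult (q powi ((3 - 2 * int m) * int a) * qbinom2 q (m - 1) a)
                                         (gdiv q (2*m - 2*a)))
         \<and> pdiv q (2*m+1) = (\<Sum>a<m. smult (q powi ((1 - 2 * int m) * int a) * qbinom2 q (m - 1) a)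
                                         (gdiv q (2*m - 2*a + 1))))
       \<and> (\<forall>(n::nat) (l::int). in_Zq q (poly (pdiv q n) (qint q (2 * l - 1))))"
proof -
  interpret generic_q_char0 q
    using assms by (rule generic_q_char0_if_transcendental)
  show ?thesis
    using pdiv_eq_expansion in_Zq_poly_pdiv_at_qint unfolding even_expansion_eq odd_expansion_eq by blast
qed

end
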